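(* For every $\beta\in[0,\infty)$, $N\in\mathbb N$, $(x,y)\in\widehat\Lambda_N\times\widehat\Lambda_N$, $t\ge0$ and every symmetric function $f:\widehat\Lambda_N\times\widehat\Lambda_N\to\mathbb R$ (i.e. $f(a,b)=f(b,a)$), $$\mathsf E^N\big[f(X^{N,x}_t,Y^{N,y}_t)\big]=\widetilde{\mathsf E}^N\big[f(\widetilde X^{N,U}_t,\widetilde Y^{N,V}_t)\big],$$ where $(U,V)$ is independent of the dynamics and equals $(x,y)$ or $(y,x)$ with probability $1/2$ each.
   Context: Fix $\alpha,\alpha_L,\alpha_R>0$, $\beta\ge0$, $\Lambda_N=\{1,\dots,N-1\}$, $\widehat\Lambda_N=\{0,\dots,N\}$. $A^N$ acts on $f:\widehat\Lambda_N\to\mathbb R$ by $A^Nf(x)=\mathbf 1_{\{x\in\Lambda_N\}}N^2\sum_{z\in\Lambda_N,|z-x|=1}\alpha(f(z)-f(x))+\mathbf 1_{\{x=1\}}N^{2-\beta}\alpha_L(f(0)-f(1))+\mathbf 1_{\{x=N-1\}}N^{2-\beta}\alpha_R(f(N)-f(N-1))$. $(X^{N,x}_t,Y^{N,y}_t)_{t\ge0}$, with law/expectation $\mathsf P^N,\mathsf E^N$, is the Markov process on $\widehat\Lambda_N^2$ started at $(x,y)$ with generator $B^Nf(x,y)=A^Nf(\cdot,y)(x)+A^Nf(x,\cdot)(y)+N^2\mathbf 1_{\{x,y\notin\{0,N\}\}}\mathbf 1_{\{|x-y|=1\}}\big((f(x,x)-f(x,y))+(f(y,y)-f(x,y))\big)$.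 $(\widetilde X^{N,x}_t,\widetilde Y^{N,y}_t)_{t\ge0}$, with law/expectation $\widetilde{\mathsf P}^N,\widetilde{\mathsf E}^N$, is the (hierarchical "first/second class") Markov process on $\widehat\Lambda_N^2$ started at $(x,y)$ with generator $C^Nf(x,y)=A^Nf(\cdot,y)(x)+A^Nf(x,\cdot)(y)+N^2\mathbf 1_{\{x,y\in\Lambda_N\}}\mathbf 1_{\{|x-y|=1\}}\,2\,(f(x,x)-f(x,y))$. *)

theory Defs
  imports "HOL-Analysis.Analysis"
begin

definition Lam :: "nat \<Rightarrow> nat set" where
  "Lam N = {1..<N}"

definition LamHat :: "nat \<Rightarrow> nat set" where
  "LamHat N = {0..N}"

definition genA :: "real \<Rightarrow> real \<Rightarrow> real \<Rightarrow> real \<Rightarrow> nat \<Rightarrow> (nat \<Rightarrow> real) \<Rightarrow> nat \<Rightarrow> real" where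
  "genA \<alpha> \<alpha>L \<alpha>R \<beta> N f x =
     (if x \<in> Lam N then real N ^ 2 *
         (\<Sum>z\<in>{z \<in> Lam N. \<bar>int z - int x\<bar> = 1}. \<alpha> * (f z - f x)) else 0)
   + (if x = 1 then real N powr (2 - \<beta>) * \<alpha>L * (f 0 - f 1) else 0)
   + (if x = N - 1 then real N powr (2 - \<beta>) * \<alpha>R * (f N - f (N - 1)) else 0)"

definition genB :: "real \<Rightarrow> real \<Rightarrow> real \<Rightarrow> real \<Rightarrow> nat \<Rightarrow> (nat \<times> nat \<Rightarrow> real) \<Rightarrow> nat \<times> nat \<Rightarrow> real" where
  "genB \<alpha> \<alpha>L \<alpha>R \<beta> N f p = (case p of (x, y) \<Rightarrow>
     genA \<alpha> \<alpha>L \<alpha>R \<beta> N (\<lambda>a. f (a, y)) x + genA \<alpha> \<alpha>L \<alpha>R \<beta> N (\<lambda>b. f (x, b)) y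
   + real N ^ 2 * (if x \<notin> {0, N} \<and> y \<notin> {0, N} \<and> \<bar>int x - int y\<bar> = 1
        then (f (x, x) - f (x, y)) + (f (y, y) - f (x, y)) else 0))"

definition genC :: "real \<Rightarrow> real \<Rightarrow> real \<Rightarrow> real \<Rightarrow> nat \<Rightarrow> (nat \<times> nat \<Rightarrow> real) \<Rightarrow> nat \<times> nat \<Rightarrow> real" where
  "genC \<alpha> \<alpha>L \<alpha>R \<beta> N f p = (case p of (x, y) \<Rightarrow>
     genA \<alpha> \<alpha>L \<alpha>R \<beta> N (\<lambda>a. f (a, y)) x + genA \<alpha> \<alpha>L \<alpha>R \<beta> N (\<lambda>b. f (x, b)) y
   + real N ^ 2 * (if x \<in> Lam N \<and> y \<in> Lam N \<and> \<bar>int x - int y\<bar> = 1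
        then 2 * (f (x, x) - f (x, y)) else 0))"

text \<open>Markov semigroup e^{tG} of a finite-state generator G, acting on observables:
  (markov_sg G t f) s = E_s[f(Z_t)] for the chain Z with generator G started at s.\<close>
definition markov_sg :: "(('s \<Rightarrow> real) \<Rightarrow> ('s \<Rightarrow> real)) \<Rightarrow> real \<Rightarrow> ('s \<Rightarrow> real) \<Rightarrow> 's \<Rightarrow> real" where
  "markov_sg G t f s = (\<Sum>k. t ^ k / fact k * (G ^^ k) f s)"

end

theory Submission
  imports Defs
begin

text \<open>Write \<open>S g (x, y) = (g (x, y) + g (y, x)) / 2\<close>. Away from neighbouring bulk pairs the
  generators \<open>B\<close> and \<open>C\<close> act identically; on such a pair \<open>B\<close> coalesces to \<open>(x, x)\<close> or
  \<open>(y, y)\<close> at rate \<open>N\<^sup>2\<close> each, while \<open>C\<close> moves the second-class particle onto the first at rate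
  \<open>2 N\<^sup>2\<close>. After symmetrisation both give \<open>N\<^sup>2 (S g (x, x) + S g (y, y) - 2 S g (x, y))\<close>, so
  \<open>S \<circ> C = B \<circ> S\<close> on the box. Hence \<open>B\<^sup>k f = S (C\<^sup>k f)\<close> for symmetric \<open>f\<close>, and the
  exponential series can be compared term by term; they converge because a linear operator on
  functions on a finite set is bounded.\<close>

definition linear_operator :: "(('s \<Rightarrow> real) \<Rightarrow> ('s \<Rightarrow> real)) \<Rightarrow> bool" where
  "linear_operator G \<longleftrightarrow>
     (\<forall>a b u v. G (\<lambda>q. a * u q + b * v q) = (\<lambda>p. a * G u p + b * G v p))"

definition local_on :: "'s set \<Rightarrow> (('s \<Rightarrow> real) \<Rightarrow> ('s \<Rightarrow> real)) \<Rightarrow> bool" where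
  "local_on D G \<longleftrightarrow> (\<forall>g g'. (\<forall>q\<in>D. g q = g' q) \<longrightarrow> (\<forall>p\<in>D. G g p = G g' p))"

lemma local_onD:
  "local_on D G \<Longrightarrow> (\<And>q. q \<in> D \<Longrightarrow> g q = g' q) \<Longrightarrow> p \<in> D \<Longrightarrow> G g p = G g' p"
  unfolding local_on_def by blast

lemma linear_operatorD:
  "linear_operator G \<Longrightarrow> G (\<lambda>q. a * u q + b * v q) p = a * G u p + b * G v p"
  unfolding linear_operator_def by meson

lemma linear_operator_sum:
  assumes "linear_operator G" "finite R"
  shows "G (\<lambda>q. \<Sum>r\<in>R. c r * g r q) p = (\<Sum>r\<in>R. c r * G (g r) p)"
  using assms(2)
proof (induction R)
  case empty
  show ?case using linear_operatorD[OF assms(1), of 0 "\<lambda>q. 0" 0 "\<lambda>q. 0"] by simp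
next
  case (insert r R)
  then show ?case
    using linear_operatorD[OF assms(1), of "c r" "g r" 1 "\<lambda>q. \<Sum>r\<in>R. c r * g r q"] by simp
qed

lemma linear_local_operator_bounded:
  fixes G :: "('s \<Rightarrow> real) \<Rightarrow> 's \<Rightarrow> real"
  assumes "finite D" "local_on D G" "linear_operator G"
  obtains K where "\<And>g m p. \<forall>q\<in>D. \<bar>g q\<bar> \<le> m \<Longrightarrow> p \<in> D \<Longrightarrow> \<bar>G g p\<bar> \<le> K * m"
proof
  define \<delta> :: "'s \<Rightarrow> 's \<Rightarrow> real" where "\<delta> r q = of_bool (q = r)" for r q
  fix g :: "'s \<Rightarrow> real" and m :: real and p :: 's
  assume g_bound: "\<forall>q\<in>D. \<bar>g q\<bar> \<le> m" and p: "p \<in> D"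
  have m_nonneg: "0 \<le> m" using g_bound p by force
  have g_expansion: "g q = (\<Sum>r\<in>D. g r * \<delta> r q)" if "q \<in> D" for q
  proof -
    have "D \<inter> {r. q = r} = {q}" using that by blast
    then show ?thesis using assms(1) by (simp add: \<delta>_def)
  qed
  have "G g p = G (\<lambda>q. \<Sum>r\<in>D. g r * \<delta> r q) p"
    using assms(2) g_expansion p by (rule local_onD)
  also have "\<dots> = (\<Sum>r\<in>D. g r * G (\<delta> r) p)"
    using assms(3,1) by (rule linear_operator_sum)
  finally have "\<bar>G g p\<bar> \<le> (\<Sum>r\<in>D. \<bar>g r\<bar> * \<bar>G (\<delta> r) p\<bar>)"
    unfolding abs_mult[symmetric] by (simp only: sum_abs)
  also have "\<dots> \<le> (\<Sum>r\<in>D. m * \<bar>G (\<delta> r) p\<bar>)"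
    using g_bound by (intro sum_mono mult_right_mono) auto
  also have "\<dots> \<le> m * (\<Sum>p\<in>D. \<Sum>r\<in>D. \<bar>G (\<delta> r) p\<bar>)"
    unfolding sum_distrib_left[symmetric] using assms(1) p m_nonneg
    by (intro mult_left_mono member_le_sum) (auto intro: sum_nonneg)
  finally show "\<bar>G g p\<bar> \<le> (\<Sum>p\<in>D. \<Sum>r\<in>D. \<bar>G (\<delta> r) p\<bar>) * m"
    by (simp add: mult.commute)
qed

lemma markov_sg_summable:
  fixes G :: "('s \<Rightarrow> real) \<Rightarrow> 's \<Rightarrow> real"
  assumes "finite D" "local_on D G" "linear_operator G" "p \<in> D"
  shows "summable (\<lambda>k. t ^ k / fact k * (G ^^ k) f p)"
proof -
  obtain K where K: "\<And>g m p. \<forall>q\<in>D. \<bar>g q\<bar> \<le> m \<Longrightarrow> p \<in> D \<Longrightarrow> \<bar>G g p\<bar> \<le> K * m"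
    using linear_local_operator_bounded assms(1-3) by blast
  define m where "m = (\<Sum>q\<in>D. \<bar>f q\<bar>)"
  have iterate_bound: "\<forall>q\<in>D. \<bar>(G ^^ k) f q\<bar> \<le> K ^ k * m" for k
  proof (induction k)
    case 0
    show ?case using assms(1) by (auto simp: m_def intro: member_le_sum)
  next
    case (Suc k)
    show ?case using K[OF Suc] by (simp add: mult.assoc)
  qed
  show ?thesis
  proof (rule summable_comparison_test)
    have "norm (t ^ k / fact k * (G ^^ k) f p) \<le> m * (inverse (fact k) * (\<bar>t\<bar> * K) ^ k)" for k
    proof -
      have "norm (t ^ k / fact k * (G ^^ k) f p) = \<bar>t\<bar> ^ k / fact k * \<bar>(G ^^ k) f p\<bar>"
        by (simp add: abs_mult power_abs)
      also have "\<dots> \<le> \<bar>t\<bar> ^ k / fact k * (K ^ k * m)"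
        using iterate_bound assms(4) by (intro mult_left_mono) auto
      also have "\<dots> = m * (inverse (fact k) * (\<bar>t\<bar> * K) ^ k)"
        by (simp add: power_mult_distrib field_simps)
      finally show ?thesis .
    qed
    then show "\<exists>N. \<forall>k\<ge>N. norm (t ^ k / fact k * (G ^^ k) f p) \<le> m * (inverse (fact k) * (\<bar>t\<bar> * K) ^ k)"
      by blast
    show "summable (\<lambda>k. m * (inverse (fact k) * (\<bar>t\<bar> * K) ^ k))"
      by (intro summable_mult summable_exp)
  qed
qed

lemma symmetrization_intertwines_funpow:
  assumes intertwining: "\<And>g p. p \<in> D \<Longrightarrow> (G g p + G g (\<sigma> p)) / 2 = H (\<lambda>q. (g q + g (\<sigma> q)) / 2) p"
    and "local_on D H" and "\<forall>q\<in>D. f (\<sigma> q) = f q" and "p \<in> D"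
  shows "(H ^^ k) f p = ((G ^^ k) f p + (G ^^ k) f (\<sigma> p)) / 2"
  using assms(4)
proof (induction k arbitrary: p)
  case 0
  then show ?case using assms(3) by simp
next
  case (Suc k)
  have "((G ^^ Suc k) f p + (G ^^ Suc k) f (\<sigma> p)) / 2
      = H (\<lambda>q. ((G ^^ k) f q + (G ^^ k) f (\<sigma> q)) / 2) p"
    using intertwining[OF Suc.prems] by simp
  also have "\<dots> = H ((H ^^ k) f) p"
    using assms(2) Suc.IH[symmetric] Suc.prems by (rule local_onD)
  finally show ?case by simp
qed

lemma markov_sg_average:
  assumes "\<And>k. (H ^^ k) f p = ((G ^^ k) f p + (G ^^ k) f p') / 2"
    and "summable (\<lambda>k. t ^ k / fact k * (G ^^ k) f p)"
    and "summable (\<lambda>k. t ^ k / fact k * (G ^^ k) f p')"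
  shows "markov_sg H t f p = (markov_sg G t f p + markov_sg G t f p') / 2"
proof -
  have "(\<lambda>k. t ^ k / fact k * (G ^^ k) f p) sums markov_sg G t f p"
       "(\<lambda>k. t ^ k / fact k * (G ^^ k) f p') sums markov_sg G t f p'"
    unfolding markov_sg_def using assms(2,3) by (auto intro: summable_sums)
  then have "(\<lambda>k. (t ^ k / fact k * (G ^^ k) f p + t ^ k / fact k * (G ^^ k) f p') / 2)
      sums ((markov_sg G t f p + markov_sg G t f p') / 2)"
    by (intro sums_divide sums_add)
  then have "(\<lambda>k. t ^ k / fact k * (H ^^ k) f p) sums ((markov_sg G t f p + markov_sg G t f p') / 2)"
    by (simp add: assms(1) add_divide_distrib[symmetric] ring_distribs)
  then show ?thesis
    unfolding markov_sg_def by (rule sums_unique[symmetric])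
qed

lemma genA_linear:
  "genA \<alpha> \<alpha>L \<alpha>R \<beta> N (\<lambda>z. a * u z + b * v z) x
     = a * genA \<alpha> \<alpha>L \<alpha>R \<beta> N u x + b * genA \<alpha> \<alpha>L \<alpha>R \<beta> N v x"
proof -
  have sum_linear: "(\<Sum>z\<in>S. \<alpha> * ((a * u z + b * v z) - (a * u x + b * v x)))
      = a * (\<Sum>z\<in>S. \<alpha> * (u z - u x)) + b * (\<Sum>z\<in>S. \<alpha> * (v z - v x))" for S
    by (simp add: sum_distrib_left sum.distrib[symmetric] algebra_simps)
  show ?thesis
    unfolding genA_def sum_linear by (simp add: algebra_simps)
qed

lemma genA_cong:
  assumes "x \<in> LamHat N" and "\<And>z. z \<in> LamHat N \<Longrightarrow> h z = h' z"
  shows "genA \<alpha> \<alpha>L \<alpha>R \<beta> N h x = genA \<alpha> \<alpha>L \<alpha>R \<beta> N h' x"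
proof -
  have "(\<Sum>z\<in>{z \<in> Lam N. \<bar>int z - int x\<bar> = 1}. \<alpha> * (h z - h x))
      = (\<Sum>z\<in>{z \<in> Lam N. \<bar>int z - int x\<bar> = 1}. \<alpha> * (h' z - h' x))"
    using assms by (intro sum.cong) (auto simp: Lam_def LamHat_def)
  then show ?thesis
    unfolding genA_def using assms by (auto simp: LamHat_def)
qed

lemma linear_operator_genC: "linear_operator (genC \<alpha> \<alpha>L \<alpha>R \<beta> N)"
  unfolding linear_operator_def genC_def by (auto simp: fun_eq_iff genA_linear algebra_simps)

lemma local_on_genC: "local_on (LamHat N \<times> LamHat N) (genC \<alpha> \<alpha>L \<alpha>R \<beta> N)"
  unfolding local_on_def genC_def
  by (auto intro!: genA_cong arg_cong2[where f = "(+)"])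

lemma local_on_genB: "local_on (LamHat N \<times> LamHat N) (genB \<alpha> \<alpha>L \<alpha>R \<beta> N)"
  unfolding local_on_def genB_def
  by (auto intro!: genA_cong arg_cong2[where f = "(+)"])

lemma genC_symmetrization:
  assumes "p \<in> LamHat N \<times> LamHat N"
  shows "(genC \<alpha> \<alpha>L \<alpha>R \<beta> N g p + genC \<alpha> \<alpha>L \<alpha>R \<beta> N g (prod.swap p)) / 2
       = genB \<alpha> \<alpha>L \<alpha>R \<beta> N (\<lambda>q. (g q + g (prod.swap q)) / 2) p"
proof -
  obtain x y where p: "p = (x, y)" and "x \<in> LamHat N" "y \<in> LamHat N"
    using assms by blast
  let ?adjacent = "x \<in> Lam N \<and> y \<in> Lam N \<and> \<bar>int x - int y\<bar> = 1"
  have adjacent_genB: "(x \<notin> {0, N} \<and> y \<notin> {0, N} \<and> \<bar>int x - int y\<bar> = 1) \<longleftrightarrow> ?adjacent"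
    using \<open>x \<in> LamHat N\<close> \<open>y \<in> LamHat N\<close> by (auto simp: Lam_def LamHat_def)
  have adjacent_swap: "(y \<in> Lam N \<and> x \<in> Lam N \<and> \<bar>int y - int x\<bar> = 1) \<longleftrightarrow> ?adjacent"
    by auto
  have average: "genA \<alpha> \<alpha>L \<alpha>R \<beta> N (\<lambda>z. (u z + v z) / 2) w
      = (genA \<alpha> \<alpha>L \<alpha>R \<beta> N u w + genA \<alpha> \<alpha>L \<alpha>R \<beta> N v w) / 2" for u v w
    using genA_linear[of \<alpha> \<alpha>L \<alpha>R \<beta> N "1/2" u "1/2" v w] by (simp add: add_divide_distrib)
  show ?thesis
    unfolding p genB_def genC_def prod.swap_def fst_conv snd_conv prod.case average
      adjacent_genB adjacent_swap
    by (simp add: field_simps)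
qed

theorem proposition4p5:
  fixes \<alpha> \<alpha>L \<alpha>R \<beta> t :: real and N x y :: nat and f :: "nat \<times> nat \<Rightarrow> real"
  assumes "\<alpha> > 0" and "\<alpha>L > 0" and "\<alpha>R > 0" and "\<beta> \<ge> 0" and "t \<ge> 0"
    and "x \<in> LamHat N" and "y \<in> LamHat N"
    and "\<forall>a\<in>LamHat N. \<forall>b\<in>LamHat N. f (a, b) = f (b, a)"
  shows "markov_sg (genB \<alpha> \<alpha>L \<alpha>R \<beta> N) t f (x, y) =
         (1/2) * markov_sg (genC \<alpha> \<alpha>L \<alpha>R \<beta> N) t f (x, y)
       + (1/2) * markov_sg (genC \<alpha> \<alpha>L \<alpha>R \<beta> N) t f (y, x)"
proof -
  let ?B = "genB \<alpha> \<alpha>L \<alpha>R \<beta> N" and ?C = "genC \<alpha> \<alpha>L \<alpha>R \<beta> N"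
  let ?D = "LamHat N \<times> LamHat N"
  have finite: "finite ?D" by (simp add: LamHat_def)
  have xy: "(x, y) \<in> ?D" and yx: "(y, x) \<in> ?D" using assms(6,7) by auto
  have f_symmetric: "\<forall>q\<in>?D. f (prod.swap q) = f q" using assms(8) by auto
  have intertwining: "p \<in> ?D \<Longrightarrow> (?C g p + ?C g (prod.swap p)) / 2 = ?B (\<lambda>q. (g q + g (prod.swap q)) / 2) p"
    for g p by (rule genC_symmetrization)
  have "(?B ^^ k) f (x, y) = ((?C ^^ k) f (x, y) + (?C ^^ k) f (y, x)) / 2" for k
    using symmetrization_intertwines_funpow[OF intertwining local_on_genB f_symmetric xy] by simp
  then have "markov_sg ?B t f (x, y) = (markov_sg ?C t f (x, y) + markov_sg ?C t f (y, x)) / 2"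
    by (intro markov_sg_average markov_sg_summable[OF finite local_on_genC linear_operator_genC] xy yx)
  then show ?thesis by simp
qed

end
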